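(* Let $T\in V$ be a target variable. If $\Upsilon$ is conservative, then the set $cpc(T)$ output by the MIPC procedure on input $D_1,\dots,D_n$ and $T$ contains all parents and children of $T$ in $G$, i.e. $pa(T)\cup ch(T)\subseteq cpc(T)$.
   Context: Let $G=(V,E)$ be a DAG (causal Bayesian network) over a finite set $V$ of random variables with joint distribution $P$ satisfying the Markov condition with respect to $G$; causal sufficiency is assumed. $pa(T)$ and $ch(T)$ are the parents and children of $T$ in $G$. There are $n\ge 1$ intervention experiments; in the $i$-th, the set $\Upsilon_i\subseteq V$ (possibly empty) is manipulated, and $\Upsilon=\{\Upsilon_1,\dots,\Upsilon_n\}$ (unknown to the procedure). The post-intervention DAG is $G_i=(V,E_i)$ with $E_i=\{(a,b)\in E: b\notin\Upsilon_i\}$, with distribution $P_i(V)=\prod_{V_j\notin\Upsilon_i}P(V_j\mid pa(V_j))\prod_{V_j\in\Upsilon_i}P_i(V_j)$, and $D_i$ is a dataset drawn from $P_i$. It is assumed that each $P_i$ is faithful to $G_i$ and that conditional independence tests on $D_i$ are reliable, i.e. "$X\perp T\mid S$ in $D_i$" holds exactly when it holds in $P_i$. $\Upsilon$ is conservative if for every $V_j\in\bigcup_i\Upsilon_i$ there exists $i$ with $V_j\notin\Upsilon_i$. The MIPC procedure: Phase 1. Initialize $cpc(T)=\emptyset$, $cmb_i(T)=\emptyset$ for all $i$, $ipc(T)=\emptyset$. For each $V_j\in V\setminus\{T\}$ and each $i$, if $V_j$ and $T$ are (marginally) dependent in $D_i$, add $V_j$ to $cpc(T)$ and to $cmb_i(T)$.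 Phase 2. Process the variables $V_j\in cpc(T)$ one at a time. If there exist a nonempty $S\subseteq ipc(T)$ and an index $k$ with $V_j\in cmb_k(T)$, $S\subseteq cmb_k(T)$ and $T\perp V_j\mid S$ in $D_k$, then remove $V_j$ from every $cmb_i(T)$ and proceed to the next variable. Otherwise add $V_j$ to $ipc(T)$, and then for each $Y\in ipc(T)\setminus\{V_j\}$: if there exist a nonempty $S\subseteq ipc(T)\setminus\{Y\}$ and an index $k$ with $Y\in cmb_k(T)$, $S\subseteq cmb_k(T)$ and $T\perp Y\mid S$ in $D_k$, remove $Y$ from $ipc(T)$ and from every $cmb_h(T)$ containing it. After all variables of $cpc(T)$ have been processed, the procedure sets and outputs $cpc(T)=ipc(T)$. *)

theory Defs
  imports Main
begin

definition is_dag :: "'v set \<Rightarrow> ('v \<times> 'v) set \<Rightarrow> bool" where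
  "is_dag V E \<longleftrightarrow> finite V \<and> E \<subseteq> V \<times> V \<and> acyclic E"

definition parents :: "('v \<times> 'v) set \<Rightarrow> 'v \<Rightarrow> 'v set" where
  "parents E T = {a. (a, T) \<in> E}"

definition children :: "('v \<times> 'v) set \<Rightarrow> 'v \<Rightarrow> 'v set" where
  "children E T = {b. (T, b) \<in> E}"

text \<open>Edge set of the post-intervention DAG: edges into manipulated variables are removed.\<close>
definition intervened_edges :: "('v \<times> 'v) set \<Rightarrow> 'v set \<Rightarrow> ('v \<times> 'v) set" where
  "intervened_edges E U = {(a, b) \<in> E. b \<notin> U}"

definition is_trail :: "'v set \<Rightarrow> ('v \<times> 'v) set \<Rightarrow> 'v list \<Rightarrow> 'v \<Rightarrow> 'v \<Rightarrow> bool" where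
  "is_trail V E p X Y \<longleftrightarrow> length p \<ge> 2 \<and> distinct p \<and> hd p = X \<and> last p = Y \<and>
     set p \<subseteq> V \<and>
     (\<forall>k. Suc k < length p \<longrightarrow> ((p ! k, p ! Suc k) \<in> E \<or> (p ! Suc k, p ! k) \<in> E))"

definition active_trail :: "('v \<times> 'v) set \<Rightarrow> 'v set \<Rightarrow> 'v list \<Rightarrow> bool" where
  "active_trail E Z p \<longleftrightarrow>
     (\<forall>k. 0 < k \<and> Suc k < length p \<longrightarrow>
        (if (p ! (k - 1), p ! k) \<in> E \<and> (p ! Suc k, p ! k) \<in> E
         then (\<exists>d \<in> Z. (p ! k, d) \<in> E\<^sup>*)
         else p ! k \<notin> Z))"

definition d_separated :: "'v set \<Rightarrow> ('v \<times> 'v) set \<Rightarrow> 'v \<Rightarrow> 'v \<Rightarrow> 'v set \<Rightarrow> bool" where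
  "d_separated V E X Y Z \<longleftrightarrow> \<not> (\<exists>p. is_trail V E p X Y \<and> active_trail E Z p)"

text \<open>indep k X Y S means: X is independent of Y given S in dataset D_k.\<close>

definition mipc_sep ::
  "nat set \<Rightarrow> (nat \<Rightarrow> 'v \<Rightarrow> 'v \<Rightarrow> 'v set \<Rightarrow> bool) \<Rightarrow> 'v \<Rightarrow> 'v set \<Rightarrow> (nat \<Rightarrow> 'v set) \<Rightarrow> 'v \<Rightarrow> bool" where
  "mipc_sep I indep T A cmb Y \<longleftrightarrow>
     (\<exists>S k. S \<noteq> {} \<and> S \<subseteq> A \<and> k \<in> I \<and> Y \<in> cmb k \<and> S \<subseteq> cmb k \<and> indep k T Y S)"

text \<open>Inner loop of Phase 2 (over the members Y of ipc(T) other than the newly added V_j,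
  in the order given by the list).\<close>
fun mipc_inner ::
  "nat set \<Rightarrow> (nat \<Rightarrow> 'v \<Rightarrow> 'v \<Rightarrow> 'v set \<Rightarrow> bool) \<Rightarrow> 'v \<Rightarrow> 'v list \<Rightarrow>
   'v set \<times> (nat \<Rightarrow> 'v set) \<Rightarrow> 'v set \<times> (nat \<Rightarrow> 'v set)" where
  "mipc_inner I indep T [] st = st"
| "mipc_inner I indep T (Y # ys) (ipc, cmb) =
     mipc_inner I indep T ys
       (if mipc_sep I indep T (ipc - {Y}) cmb Y
        then (ipc - {Y}, \<lambda>h. cmb h - {Y}) else (ipc, cmb))"

text \<open>Phase 2 as a (nondeterministic in the processing orders) run relation:
  mipc_phase2 I indep T R (ipc, cmb) st' means that processing the remaining
  candidates R from state (ipc, cmb), in some order, can end in state st'.\<close>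
inductive mipc_phase2 ::
  "nat set \<Rightarrow> (nat \<Rightarrow> 'v \<Rightarrow> 'v \<Rightarrow> 'v set \<Rightarrow> bool) \<Rightarrow> 'v \<Rightarrow> 'v set \<Rightarrow>
   'v set \<times> (nat \<Rightarrow> 'v set) \<Rightarrow> 'v set \<times> (nat \<Rightarrow> 'v set) \<Rightarrow> bool"
  for I indep T where
  finish: "mipc_phase2 I indep T {} st st"
| drop: "\<lbrakk> Vj \<in> R; mipc_sep I indep T ipc cmb Vj;
           mipc_phase2 I indep T (R - {Vj}) (ipc, \<lambda>i. cmb i - {Vj}) st' \<rbrakk>
         \<Longrightarrow> mipc_phase2 I indep T R (ipc, cmb) st'"
| add: "\<lbrakk> Vj \<in> R; \<not> mipc_sep I indep T ipc cmb Vj; distinct ys; set ys = ipc;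
          mipc_phase2 I indep T (R - {Vj}) (mipc_inner I indep T ys (insert Vj ipc, cmb)) st' \<rbrakk>
        \<Longrightarrow> mipc_phase2 I indep T R (ipc, cmb) st'"

definition mipc_cmb0 :: "'v set \<Rightarrow> (nat \<Rightarrow> 'v \<Rightarrow> 'v \<Rightarrow> 'v set \<Rightarrow> bool) \<Rightarrow> 'v \<Rightarrow> nat \<Rightarrow> 'v set" where
  "mipc_cmb0 V indep T i = {Vj \<in> V - {T}. \<not> indep i T Vj {}}"

definition mipc_cpc0 :: "'v set \<Rightarrow> nat set \<Rightarrow> (nat \<Rightarrow> 'v \<Rightarrow> 'v \<Rightarrow> 'v set \<Rightarrow> bool) \<Rightarrow> 'v \<Rightarrow> 'v set" where
  "mipc_cpc0 V I indep T = {Vj \<in> V - {T}. \<exists>i \<in> I. \<not> indep i T Vj {}}"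

text \<open>out is a possible output cpc(T) of MIPC (for some processing order).\<close>
definition mipc_output :: "'v set \<Rightarrow> nat set \<Rightarrow> (nat \<Rightarrow> 'v \<Rightarrow> 'v \<Rightarrow> 'v set \<Rightarrow> bool) \<Rightarrow> 'v \<Rightarrow> 'v set \<Rightarrow> bool" where
  "mipc_output V I indep T out \<longleftrightarrow>
     (\<exists>cmb'. mipc_phase2 I indep T (mipc_cpc0 V I indep T) ({}, mipc_cmb0 V indep T) (out, cmb'))"

definition conservative :: "nat set \<Rightarrow> (nat \<Rightarrow> 'v set) \<Rightarrow> bool" where
  "conservative I Ups \<longleftrightarrow> (\<forall>v \<in> (\<Union>i\<in>I. Ups i). \<exists>i \<in> I. v \<notin> Ups i)"

end

theory Submission
  imports Defs
begin

text \<open>A neighbour X of T in G stays marginally dependent on T in some experiment: by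
  conservativeness some experiment does not manipulate the head of the edge, so the edge
  survives and d-connects X and T. Hence X enters cpc(T) in Phase 1. Conversely, in every
  experiment where X is marginally dependent on T, an active trail given the empty set has no
  collider, so it is a directed path; if the edge between X and T had been cut, this path would
  close a directed cycle with the cut edge. So the edge is present in every experiment k with X in cmb_k(T),
  and an edge is never d-separated by any conditioning set. Therefore no test of Phase 2 ever finds X
  independent of T, and X is never removed.\<close>

definition trail_steps :: "('v \<times> 'v) set \<Rightarrow> 'v list \<Rightarrow> bool" where
  "trail_steps F p \<longleftrightarrow>
     (\<forall>k. Suc k < length p \<longrightarrow> (p ! k, p ! Suc k) \<in> F \<or> (p ! Suc k, p ! k) \<in> F)"

definition collider_free :: "('v \<times> 'v) set \<Rightarrow> 'v list \<Rightarrow> bool" where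
  "collider_free F p \<longleftrightarrow>
     (\<forall>k. 0 < k \<and> Suc k < length p \<longrightarrow> \<not> ((p ! (k - 1), p ! k) \<in> F \<and> (p ! Suc k, p ! k) \<in> F))"

lemma trail_steps_if_is_trail: "is_trail V F p X Y \<Longrightarrow> trail_steps F p"
  unfolding is_trail_def trail_steps_def by blast

lemma active_trail_empty_iff_collider_free: "active_trail F {} p \<longleftrightarrow> collider_free F p"
  unfolding active_trail_def collider_free_def by auto

lemma collider_free_forward_steps:
  assumes "trail_steps F p" "collider_free F p" "(p ! 0, p ! 1) \<in> F" "Suc j < length p"
  shows "(p ! j, p ! Suc j) \<in> F"
  using assms(4)
proof (induction j)
  case 0
  then show ?case using assms(3) by simp
next
  case (Suc j)
  then have "(p ! j, p ! Suc j) \<in> F" by simp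
  with Suc.prems assms(2) have "(p ! Suc (Suc j), p ! Suc j) \<notin> F"
    unfolding collider_free_def by (metis diff_Suc_1 zero_less_Suc)
  with Suc.prems assms(1) show ?case unfolding trail_steps_def by blast
qed

lemma collider_free_backward_steps:
  assumes "trail_steps F p" "collider_free F p" "length p \<ge> 2"
    and "(p ! (length p - 1), p ! (length p - 2)) \<in> F" "Suc j < length p"
  shows "(p ! Suc j, p ! j) \<in> F"
  using assms(5)
proof (induction "length p - Suc (Suc j)" arbitrary: j)
  case 0
  then have "j = length p - 2" by simp
  then show ?case using assms(3,4) by (simp add: numeral_2_eq_2 Suc_diff_Suc)
next
  case (Suc d)
  then have "(p ! Suc (Suc j), p ! Suc j) \<in> F"
    by (metis Suc_diff_Suc diff_Suc_1 zero_less_Suc zero_less_diff)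
  moreover have "Suc (Suc j) < length p" using Suc by simp
  ultimately have "(p ! j, p ! Suc j) \<notin> F"
    using assms(2) unfolding collider_free_def by (metis diff_Suc_1 zero_less_Suc)
  with Suc.prems assms(1) show ?case unfolding trail_steps_def by blast
qed

lemma rtrancl_if_forward_steps:
  assumes "\<And>j. Suc j < length p \<Longrightarrow> (p ! j, p ! Suc j) \<in> F" "j < length p"
  shows "(p ! 0, p ! j) \<in> F\<^sup>*"
  using assms(2)
proof (induction j)
  case (Suc j)
  then show ?case using assms(1)[of j] by (meson Suc_lessD rtrancl.rtrancl_into_rtrancl)
qed simp

lemma rtrancl_if_backward_steps:
  assumes "\<And>j. Suc j < length p \<Longrightarrow> (p ! Suc j, p ! j) \<in> F" "j < length p"
  shows "(p ! j, p ! 0) \<in> F\<^sup>*"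
  using assms(2)
proof (induction j)
  case (Suc j)
  then show ?case using assms(1)[of j] by (meson Suc_lessD converse_rtrancl_into_rtrancl)
qed simp

lemma collider_free_trail_forward_path:
  assumes "trail_steps F p" "collider_free F p" "length p \<ge> 2" "(p ! 0, p ! 1) \<in> F"
  shows "(p ! 0, p ! (length p - 1)) \<in> F\<^sup>*"
  using rtrancl_if_forward_steps[OF collider_free_forward_steps[OF assms(1,2,4)]] assms(3)
  by simp

lemma collider_free_trail_backward_path:
  assumes "trail_steps F p" "collider_free F p" "length p \<ge> 2"
    and "(p ! (length p - 1), p ! (length p - 2)) \<in> F"
  shows "(p ! (length p - 1), p ! 0) \<in> F\<^sup>*"
  using rtrancl_if_backward_steps[OF collider_free_backward_steps[OF assms]] assms(3)
  by simp

lemma intervened_edges_subset: "intervened_edges E U \<subseteq> E"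
  unfolding intervened_edges_def by auto

lemma adjacent_not_d_separated:
  assumes "X \<in> V" "Y \<in> V" "X \<noteq> Y" "(X, Y) \<in> F \<or> (Y, X) \<in> F"
  shows "\<not> d_separated V F X Y S"
proof -
  have "is_trail V F [X, Y] X Y"
    using assms unfolding is_trail_def by (auto simp: less_Suc_eq)
  moreover have "active_trail F S [X, Y]" unfolding active_trail_def by auto
  ultimately show ?thesis unfolding d_separated_def by blast
qed

lemma intervened_adjacent_if_d_connected:
  assumes acyclic: "acyclic E"
    and adjacent: "(X, T) \<in> E \<or> (T, X) \<in> E"
    and connected: "\<not> d_separated V (intervened_edges E U) T X {}"
  shows "(X, T) \<in> intervened_edges E U \<or> (T, X) \<in> intervened_edges E U"
proof (rule ccontr)
  assume cut: "\<not> ?thesis"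
  define F where "F = intervened_edges E U"
  obtain p where trail: "is_trail V F p T X" and "active_trail F {} p"
    using connected unfolding d_separated_def F_def by blast
  then have steps: "trail_steps F p" and cf: "collider_free F p" and len: "length p \<ge> 2"
    by (auto simp: trail_steps_if_is_trail active_trail_empty_iff_collider_free is_trail_def)
  have hd: "p ! 0 = T" and lst: "p ! (length p - 1) = X"
    using trail len unfolding is_trail_def
    by (metis hd_conv_nth last_conv_nth list.size(3) not_numeral_le_zero)+
  have FE: "F\<^sup>* \<subseteq> E\<^sup>*" using rtrancl_mono[OF intervened_edges_subset] F_def by simp
  have into_U: "(a, b) \<in> E \<Longrightarrow> (a, b) \<notin> F \<Longrightarrow> b \<in> U" for a b
    unfolding F_def intervened_edges_def by simp
  have not_into_U: "(a, b) \<in> F \<Longrightarrow> b \<notin> U" for a b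
    unfolding F_def intervened_edges_def by simp
  show False
  proof (cases "(X, T) \<in> E")
    case True
    then have "T \<in> U" using cut into_U F_def by blast
    then have "(p ! 1, p ! 0) \<notin> F" using not_into_U hd by blast
    then have "(p ! 0, p ! 1) \<in> F" using steps len unfolding trail_steps_def by force
    then have "(T, X) \<in> E\<^sup>*"
      using collider_free_trail_forward_path[OF steps cf len] hd lst FE by auto
    with True have "(X, X) \<in> E\<^sup>+" by (meson rtrancl_into_trancl2)
    then show False using acyclic unfolding acyclic_def by blast
  next
    case False
    then have TX: "(T, X) \<in> E" using adjacent by simp
    then have "X \<in> U" using cut into_U F_def by blast
    moreover have last_step: "Suc (length p - 2) = length p - 1" "Suc (length p - 2) < length p"
      using len by auto
    ultimately have "(p ! (length p - 2), p ! (length p - 1)) \<notin> F"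
      using not_into_U lst by blast
    then have "(p ! (length p - 1), p ! (length p - 2)) \<in> F"
      using steps last_step unfolding trail_steps_def by metis
    then have "(X, T) \<in> E\<^sup>*"
      using collider_free_trail_backward_path[OF steps cf len] hd lst FE by auto
    with TX have "(T, T) \<in> E\<^sup>+" by (meson rtrancl_into_trancl2)
    then show False using acyclic unfolding acyclic_def by blast
  qed
qed

lemma conservative_keeps_edge:
  assumes "conservative I Ups" "I \<noteq> {}" "(a, b) \<in> E"
  shows "\<exists>i\<in>I. (a, b) \<in> intervened_edges E (Ups i)"
proof -
  have "\<exists>i\<in>I. b \<notin> Ups i"
    using assms(1,2) unfolding conservative_def by blast
  then show ?thesis using assms(3) unfolding intervened_edges_def by blast
qed

definition mipc_inseparable ::
  "nat set \<Rightarrow> (nat \<Rightarrow> 'v \<Rightarrow> 'v \<Rightarrow> 'v set \<Rightarrow> bool) \<Rightarrow> 'v \<Rightarrow> (nat \<Rightarrow> 'v set) \<Rightarrow> 'v \<Rightarrow> bool" where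
  "mipc_inseparable I indep T C X \<longleftrightarrow>
     (\<forall>k\<in>I. \<forall>S. X \<in> C k \<longrightarrow> S \<subseteq> C k \<longrightarrow> X \<notin> S \<longrightarrow> \<not> indep k T X S)"

lemma not_mipc_sep_if_inseparable:
  assumes "mipc_inseparable I indep T C X" "\<forall>k\<in>I. cmb k \<subseteq> C k" "X \<notin> A"
  shows "\<not> mipc_sep I indep T A cmb X"
  using assms unfolding mipc_inseparable_def mipc_sep_def by blast

lemma mipc_inner_shrinks:
  "fst (mipc_inner I indep T ys (ipc, cmb)) \<subseteq> ipc \<and>
   (\<forall>k. snd (mipc_inner I indep T ys (ipc, cmb)) k \<subseteq> cmb k)"
proof (induction ys arbitrary: ipc cmb)
  case (Cons Y ys)
  then show ?case
    using Cons[of "ipc - {Y}" "\<lambda>h. cmb h - {Y}"] Cons[of ipc cmb] by auto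
qed simp

lemma mipc_inner_keeps_inseparable:
  assumes "mipc_inseparable I indep T C X" "X \<in> ipc" "\<forall>k\<in>I. cmb k \<subseteq> C k"
  shows "X \<in> fst (mipc_inner I indep T ys (ipc, cmb))"
  using assms(2,3)
proof (induction ys arbitrary: ipc cmb)
  case (Cons Y ys)
  show ?case
  proof (cases "mipc_sep I indep T (ipc - {Y}) cmb Y")
    case True
    then have "X \<noteq> Y"
      using not_mipc_sep_if_inseparable[OF assms(1) Cons.prems(2)] by blast
    then show ?thesis using True Cons.IH[of "ipc - {Y}" "\<lambda>h. cmb h - {Y}"] Cons.prems by auto
  next
    case False
    then show ?thesis using Cons by auto
  qed
qed simp

lemma mipc_phase2_keeps_inseparable:
  assumes "mipc_phase2 I indep T R st st'" "mipc_inseparable I indep T C X"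
    and "fst st \<inter> R = {}" "\<forall>k\<in>I. snd st k \<subseteq> C k" "X \<in> R \<union> fst st"
  shows "X \<in> fst st'"
  using assms(1,3-)
proof (induction rule: mipc_phase2.induct)
  case (drop Vj R ipc cmb st')
  have "X \<noteq> Vj"
  proof
    assume "X = Vj"
    with drop.prems drop.hyps(1) have "X \<notin> ipc" by auto
    with drop.hyps(2) drop.prems(2) \<open>X = Vj\<close> show False
      using not_mipc_sep_if_inseparable[OF assms(2)] by auto
  qed
  then show ?case using drop by auto
next
  case (add Vj R ipc cmb ys st')
  obtain ipc' cmb' where inner: "mipc_inner I indep T ys (insert Vj ipc, cmb) = (ipc', cmb')"
    by fastforce
  have "ipc' \<subseteq> insert Vj ipc" "\<forall>k. cmb' k \<subseteq> cmb k"
    using mipc_inner_shrinks[of I indep T ys "insert Vj ipc" cmb] inner by auto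
  moreover have "X \<in> insert Vj ipc \<Longrightarrow> X \<in> ipc'"
    using mipc_inner_keeps_inseparable[OF assms(2), of "insert Vj ipc" cmb ys] inner add.prems
    by auto
  ultimately show ?case using add.IH add.prems inner by fastforce
qed simp

lemma mipc_output_keeps_inseparable:
  assumes "mipc_output V I indep T out" "X \<in> mipc_cpc0 V I indep T"
    and "mipc_inseparable I indep T (mipc_cmb0 V indep T) X"
  shows "X \<in> out"
proof -
  obtain cmb' where
    "mipc_phase2 I indep T (mipc_cpc0 V I indep T) ({}, mipc_cmb0 V indep T) (out, cmb')"
    using assms(1) unfolding mipc_output_def by blast
  from mipc_phase2_keeps_inseparable[OF this assms(3)] assms(2) show ?thesis by simp
qed

lemma neighbour_in_mipc_cpc0:
  assumes cons: "conservative I Ups" "I \<noteq> {}"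
    and adjacent: "(X, T) \<in> E \<or> (T, X) \<in> E" "T \<in> V" "X \<in> V" "X \<noteq> T"
    and faithful: "\<forall>i\<in>I. indep i T X {} \<longleftrightarrow> d_separated V (intervened_edges E (Ups i)) T X {}"
  shows "X \<in> mipc_cpc0 V I indep T"
proof -
  obtain i where "i \<in> I"
    and "(X, T) \<in> intervened_edges E (Ups i) \<or> (T, X) \<in> intervened_edges E (Ups i)"
    using adjacent(1) conservative_keeps_edge[OF cons] by blast
  then show ?thesis
    using adjacent_not_d_separated[OF adjacent(2-3)] adjacent(3-4) faithful
    unfolding mipc_cpc0_def by blast
qed

lemma neighbour_mipc_inseparable:
  assumes acyclic: "acyclic E"
    and adjacent: "(X, T) \<in> E \<or> (T, X) \<in> E" "T \<in> V" "X \<in> V" "X \<noteq> T"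
    and faithful: "\<forall>i\<in>I. \<forall>S. S \<subseteq> V \<longrightarrow> T \<notin> S \<longrightarrow> X \<notin> S \<longrightarrow>
                     (indep i T X S \<longleftrightarrow> d_separated V (intervened_edges E (Ups i)) T X S)"
  shows "mipc_inseparable I indep T (mipc_cmb0 V indep T) X"
  unfolding mipc_inseparable_def
proof (intro ballI allI impI)
  fix k S
  assume k: "k \<in> I" and "X \<in> mipc_cmb0 V indep T k" and S: "S \<subseteq> mipc_cmb0 V indep T k" "X \<notin> S"
  then have "\<not> indep k T X {}" unfolding mipc_cmb0_def by auto
  then have "\<not> d_separated V (intervened_edges E (Ups k)) T X {}" using faithful k by auto
  then have "(X, T) \<in> intervened_edges E (Ups k) \<or> (T, X) \<in> intervened_edges E (Ups k)"
    using intervened_adjacent_if_d_connected[OF acyclic adjacent(1)] by blast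
  then have "\<not> d_separated V (intervened_edges E (Ups k)) T X S"
    using adjacent_not_d_separated[OF adjacent(2-3)] adjacent(4) by blast
  moreover have "S \<subseteq> V" "T \<notin> S" using S unfolding mipc_cmb0_def by auto
  ultimately show "\<not> indep k T X S" using faithful k S by blast
qed

theorem theorem13:
  fixes V :: "'v set" and E :: "('v \<times> 'v) set" and n :: nat
    and Ups :: "nat \<Rightarrow> 'v set"
    and indep :: "nat \<Rightarrow> 'v \<Rightarrow> 'v \<Rightarrow> 'v set \<Rightarrow> bool"
    and T :: 'v and out :: "'v set"
  assumes dag: "is_dag V E"
    and n: "n \<ge> 1"
    and ups: "\<forall>i \<in> {1..n}. Ups i \<subseteq> V"
    and faithful_markov: "\<forall>i \<in> {1..n}. \<forall>X Y S. X \<in> V \<longrightarrow> Y \<in> V \<longrightarrow> X \<noteq> Y \<longrightarrow> S \<subseteq> V \<longrightarrow>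
            X \<notin> S \<longrightarrow> Y \<notin> S \<longrightarrow>
            (indep i X Y S \<longleftrightarrow> d_separated V (intervened_edges E (Ups i)) X Y S)"
    and T: "T \<in> V"
    and cons: "conservative {1..n} Ups"
    and out: "mipc_output V {1..n} indep T out"
  shows "parents E T \<union> children E T \<subseteq> out"
proof
  fix X assume "X \<in> parents E T \<union> children E T"
  then have adjacent: "(X, T) \<in> E \<or> (T, X) \<in> E" unfolding parents_def children_def by auto
  have acyclic: "acyclic E" and "E \<subseteq> V \<times> V" using dag unfolding is_dag_def by auto
  then have X: "X \<in> V" "X \<noteq> T" using adjacent unfolding acyclic_def by auto
  have faithful: "\<forall>i\<in>{1..n}. \<forall>S. S \<subseteq> V \<longrightarrow> T \<notin> S \<longrightarrow> X \<notin> S \<longrightarrow>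
                   (indep i T X S \<longleftrightarrow> d_separated V (intervened_edges E (Ups i)) T X S)"
    using faithful_markov T X by auto
  have "X \<in> mipc_cpc0 V {1..n} indep T"
    using neighbour_in_mipc_cpc0[OF cons _ adjacent T X] faithful n by auto
  moreover have "mipc_inseparable {1..n} indep T (mipc_cmb0 V indep T) X"
    using neighbour_mipc_inseparable[where Ups = Ups and indep = indep, OF acyclic adjacent T X faithful] .
  ultimately show "X \<in> out" using mipc_output_keeps_inseparable[OF out] by blast
qed

end
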